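(* Let $G=(V,E)$ be a finite undirected graph with $m=|E|\ge 1$ edges, and for each node $i\in V$ let $k_i$ denote its degree. Consider the random multigraph $G'$ produced by the configuration model from $G$ (see context). For nonnegative integers $a,b,c$ and positive integer $M$ define \[ A(a,b,M)=\sum_{t=1}^{\min\{a,b\}}(-1)^{t+1}\frac{\binom{a}{t}\binom{b}{t}\,t!}{\prod_{p=1}^{t}(2M+1-2p)}, \] \[ C(a,b,c,M)=\sum_{t=1}^{\min\{b,c-1\}}(-1)^{t+1}A(a,c-t,M-t)\,\frac{\binom{c}{t}\binom{b}{t}\,t!}{\prod_{p=1}^{t}(2M+1-2p)}, \] \[ T(a,b,c,M)=\sum_{t=1}^{\min\{a-1,b-1\}}(-1)^{t+1}C(a-t,b-t,c,M-t)\,\frac{\binom{a}{t}\binom{b}{t}\,t!}{\prod_{p=1}^{t}(2M+1-2p)}, \] with empty sums equal to $0$. Then for any three pairwise distinct nodes $i,j,r\in V$: (1) the probability that $i$ and $j$ are connected in $G'$ equals $A(k_i,k_j,m)$; (2) the probability that $i$ and $r$ are connected and $j$ and $r$ are connected in $G'$ equals $C(k_i,k_j,k_r,m)$; (3) the probability that $i$ and $r$ are connected, $j$ and $r$ are connected, and $i$ and $j$ are connected in $G'$ equals $T(k_i,k_j,k_r,m)$.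
   Context: Configuration model: given $G=(V,E)$ with $m$ edges and degrees $k_i$, each node $i$ is given $k_i$ "stubs" (half-edges), for a total of $2m$ stubs. A perfect matching of the $2m$ stubs is chosen uniformly at random among all $(2m)!/(2^m m!)=\prod_{p=1}^{m}(2m+1-2p)$ perfect matchings; each matched pair of stubs, one attached to node $u$ and one to node $v$, becomes an edge $\{u,v\}$ of the random multigraph $G'$ (multi-edges and self-loops allowed). Thus every node keeps its degree $k_i$. Two distinct nodes $u,v$ are said to be connected in $G'$ if at least one stub of $u$ is matched with at least one stub of $v$. *)

theory Defs
  imports Complex_Main "HOL-Library.Disjoint_Sets"
begin

definition simple_graph :: "'a set \<Rightarrow> 'a set set \<Rightarrow> bool" where
  "simple_graph V E \<longleftrightarrow> finite V \<and>
     (\<forall>e\<in>E. \<exists>u v. u \<noteq> v \<and> u \<in> V \<and> v \<in> V \<and> e = {u, v})"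

definition deg :: "'a set set \<Rightarrow> 'a \<Rightarrow> nat" where
  "deg E i = card {e\<in>E. i \<in> e}"

definition stubs :: "'a set \<Rightarrow> 'a set set \<Rightarrow> ('a \<times> nat) set" where
  "stubs V E = {(i, s). i \<in> V \<and> s < deg E i}"

definition perfect_matchings :: "'b set \<Rightarrow> 'b set set set" where
  "perfect_matchings S = {P. partition_on S P \<and> (\<forall>b\<in>P. card b = 2)}"

(* u and v are connected in the multigraph given by matching P:
   some stub of u is matched with some stub of v *)
definition cm_connected :: "('a \<times> nat) set set \<Rightarrow> 'a \<Rightarrow> 'a \<Rightarrow> bool" where
  "cm_connected P u v \<longleftrightarrow> (\<exists>b\<in>P. \<exists>s t. (u, s) \<in> b \<and> (v, t) \<in> b)"

definition cm_prob :: "'a set \<Rightarrow> 'a set set \<Rightarrow> (('a \<times> nat) set set \<Rightarrow> bool) \<Rightarrow> real" where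
  "cm_prob V E Q = real (card {P \<in> perfect_matchings (stubs V E). Q P})
                   / real (card (perfect_matchings (stubs V E)))"

definition dprod :: "int \<Rightarrow> nat \<Rightarrow> real" where
  "dprod M t = (\<Prod>p = 1..t. 2 * real_of_int M + 1 - 2 * real p)"

definition A_fun :: "nat \<Rightarrow> nat \<Rightarrow> int \<Rightarrow> real" where
  "A_fun a b M = (\<Sum>t = 1..min a b. (-1) ^ (t + 1) *
      (real (a choose t) * real (b choose t) * fact t) / dprod M t)"

definition C_fun :: "nat \<Rightarrow> nat \<Rightarrow> nat \<Rightarrow> int \<Rightarrow> real" where
  "C_fun a b c M = (\<Sum>t = 1..min b (c - 1). (-1) ^ (t + 1) * A_fun a (c - t) (M - int t) *
      (real (c choose t) * real (b choose t) * fact t) / dprod M t)"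

definition T_fun :: "nat \<Rightarrow> nat \<Rightarrow> nat \<Rightarrow> int \<Rightarrow> real" where
  "T_fun a b c M = (\<Sum>t = 1..min (a - 1) (b - 1). (-1) ^ (t + 1) * C_fun (a - t) (b - t) c (M - int t) *
      (real (a choose t) * real (b choose t) * fact t) / dprod M t)"

end

theory Submission
  imports Defs "HOL-Library.FuncSet"
begin

(* A perfect matching of the stubs connects two disjoint stub sets X and Y iff it contains one of
   the cross pairs {x, y} with x in X and y in Y. By inclusion-exclusion over sets of cross pairs,
   only the disjoint ones (partial matchings between X and Y) contribute: there are
   C(|X|,t) C(|Y|,t) t! of size t, and each lies in as many perfect matchings as there are on the
   remaining 2(m - t) stubs, i.e. (2(m - t) - 1)!!. Dividing by (2m - 1)!! produces the factor
   1 / prod_{p=1..t} (2m + 1 - 2p). For the joint events one conditions on the pairs forced by one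
   of them; the remaining events then only concern the residual stubs, which yields the nested
   formulas C and T. *)

section \<open>Perfect matchings\<close>

lemma perfect_matchings_iff:
  "P \<in> perfect_matchings S \<longleftrightarrow> \<Union>P = S \<and> disjoint P \<and> {} \<notin> P \<and> (\<forall>b\<in>P. card b = 2)"
  by (auto simp: perfect_matchings_def partition_on_def)

lemma finite_perfect_matchings: "finite S \<Longrightarrow> finite (perfect_matchings S)"
  by (rule finite_subset[of _ "Pow (Pow S)"]) (auto simp: perfect_matchings_iff)

lemma disjoint_if_subset_perfect_matching:
  "P \<in> perfect_matchings S \<Longrightarrow> I \<subseteq> P \<Longrightarrow> disjoint I"
  by (auto simp: perfect_matchings_iff intro: pairwise_subset)

lemma perfect_matchings_Diff:
  assumes P: "P \<in> perfect_matchings S" and "I \<subseteq> P"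
  shows "P - I \<in> perfect_matchings (S - \<Union>I)"
proof -
  have "\<Union>(P - I) = S - \<Union>I"
    using P \<open>I \<subseteq> P\<close> by (auto simp: perfect_matchings_iff dest: disjointD)
  moreover have "disjoint (P - I)"
    using P by (auto simp: perfect_matchings_iff intro: pairwise_subset)
  ultimately show ?thesis
    using P by (auto simp: perfect_matchings_iff)
qed

lemma perfect_matchings_Un:
  assumes P': "P' \<in> perfect_matchings (S - \<Union>I)"
    and I: "\<forall>b\<in>I. card b = 2" "\<Union>I \<subseteq> S" "disjoint I"
  shows "P' \<union> I \<in> perfect_matchings S"
proof -
  have "disjoint (P' \<union> I)"
    using P' I(3) by (intro disjoint_union) (auto simp: perfect_matchings_iff)
  moreover have "{} \<notin> I"
    using I(1) by fastforce
  ultimately show ?thesis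
    using P' I by (auto simp: perfect_matchings_iff)
qed

lemma bij_betw_perfect_matchings_containing:
  assumes "\<forall>b\<in>I. card b = 2" "\<Union>I \<subseteq> S" "disjoint I"
  shows "bij_betw (\<lambda>P'. P' \<union> I) {P' \<in> perfect_matchings (S - \<Union>I). R (P' \<union> I)}
           {P \<in> perfect_matchings S. I \<subseteq> P \<and> R P}"
proof (rule bij_betw_byWitness[where f' = "\<lambda>P. P - I"])
  have "P' \<inter> I = {}" if "P' \<in> perfect_matchings (S - \<Union>I)" for P'
  proof -
    have "b \<noteq> {}" "b \<subseteq> S - \<Union>I" if "b \<in> P'" for b
      using \<open>P' \<in> _\<close> that by (auto simp: perfect_matchings_iff)
    then show ?thesis
      by blast
  qed
  then show "\<forall>P'\<in>{P' \<in> perfect_matchings (S - \<Union>I). R (P' \<union> I)}. P' \<union> I - I = P'"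
    by blast
  show "\<forall>P\<in>{P \<in> perfect_matchings S. I \<subseteq> P \<and> R P}. P - I \<union> I = P"
    by blast
  show "(\<lambda>P'. P' \<union> I) ` {P' \<in> perfect_matchings (S - \<Union>I). R (P' \<union> I)}
          \<subseteq> {P \<in> perfect_matchings S. I \<subseteq> P \<and> R P}"
    using perfect_matchings_Un[OF _ assms] by auto
  show "(\<lambda>P. P - I) ` {P \<in> perfect_matchings S. I \<subseteq> P \<and> R P}
          \<subseteq> {P' \<in> perfect_matchings (S - \<Union>I). R (P' \<union> I)}"
    using perfect_matchings_Diff by (fastforce simp: Un_absorb2)
qed

lemma card_perfect_matchings_containing:
  assumes "\<forall>b\<in>I. card b = 2" "\<Union>I \<subseteq> S" "disjoint I"
  shows "card {P \<in> perfect_matchings S. I \<subseteq> P \<and> R P}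
           = card {P' \<in> perfect_matchings (S - \<Union>I). R (P' \<union> I)}"
  using bij_betw_same_card[OF bij_betw_perfect_matchings_containing[OF assms]] by simp

fun odd_double_fact :: "nat \<Rightarrow> nat" where
  "odd_double_fact 0 = 1"
| "odd_double_fact (Suc n) = (2 * n + 1) * odd_double_fact n"

lemma odd_double_fact_pos: "odd_double_fact n > 0"
  by (induction n) auto

lemma card_perfect_matchings:
  "finite S \<Longrightarrow> card S = 2 * n \<Longrightarrow> card (perfect_matchings S) = odd_double_fact n"
proof (induction n arbitrary: S)
  case 0
  then have "perfect_matchings S = {{}}"
    by (auto simp: perfect_matchings_iff)
  then show ?case
    by simp
next
  case (Suc n)
  then obtain x where x: "x \<in> S"
    by fastforce
  define with_pair where "with_pair y = {P \<in> perfect_matchings S. {x, y} \<in> P}" for y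
  have partner: "\<exists>y\<in>S - {x}. {x, y} \<in> P" if P: "P \<in> perfect_matchings S" for P
  proof -
    obtain b where b: "b \<in> P" "x \<in> b"
      using P x by (auto simp: perfect_matchings_iff)
    moreover have "card b = 2"
      using P b by (auto simp: perfect_matchings_iff)
    ultimately obtain y where "b = {x, y}" "y \<noteq> x"
      by (metis card_2_iff insert_commute insert_iff singletonD)
    with b P show ?thesis
      by (auto simp: perfect_matchings_iff)
  qed
  have U: "perfect_matchings S = (\<Union>y\<in>S - {x}. with_pair y)"
    using partner by (auto simp: with_pair_def)
  have disj: "with_pair y \<inter> with_pair z = {}" if "y \<noteq> z" for y z
    using that by (auto simp: with_pair_def perfect_matchings_iff doubleton_eq_iff dest: disjointD)
  have "card (perfect_matchings S) = (\<Sum>y\<in>S - {x}. card (with_pair y))"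
    unfolding U
  proof (rule card_UN_disjoint)
    show "finite (S - {x})"
      using Suc.prems(1) by simp
    show "\<forall>y\<in>S - {x}. finite (with_pair y)"
      using finite_perfect_matchings[OF Suc.prems(1)] by (simp add: with_pair_def)
  qed (use disj in blast)
  also have "\<dots> = (\<Sum>y\<in>S - {x}. odd_double_fact n)"
  proof (rule sum.cong)
    fix y assume y: "y \<in> S - {x}"
    have "card (with_pair y) = card (perfect_matchings (S - {x, y}))"
      using card_perfect_matchings_containing[of "{{x, y}}" S "\<lambda>_. True"] x y
      by (auto simp: with_pair_def disjoint_def)
    also have "\<dots> = odd_double_fact n"
      using Suc.prems x y by (intro Suc.IH) (auto simp: card_Diff_subset)
    finally show "card (with_pair y) = odd_double_fact n" .
  qed simp
  finally show ?case
    using Suc.prems x by simp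
qed

lemma odd_double_fact_eq_dprod:
  "t \<le> n \<Longrightarrow> real (odd_double_fact n) = dprod (int n) t * real (odd_double_fact (n - t))"
proof (induction t)
  case 0
  then show ?case
    by (simp add: dprod_def)
next
  case (Suc t)
  have "odd_double_fact (n - t) = (2 * (n - Suc t) + 1) * odd_double_fact (n - Suc t)"
    using Suc.prems by (metis Suc_diff_Suc Suc_le_lessD odd_double_fact.simps(2))
  moreover have "real (2 * (n - Suc t) + 1) = 2 * real n + 1 - 2 * real (Suc t)"
    using Suc.prems by (simp add: of_nat_diff)
  moreover have "dprod (int n) (Suc t) = dprod (int n) t * (2 * real n + 1 - 2 * real (Suc t))"
    by (simp add: dprod_def)
  ultimately show ?case
    using Suc by (metis of_nat_mult mult.assoc Suc_leD)
qed

lemma dprod_pos: "t \<le> n \<Longrightarrow> dprod (int n) t > 0"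
  using odd_double_fact_eq_dprod[of t n] odd_double_fact_pos[of n] odd_double_fact_pos[of "n - t"]
  by (metis of_nat_0_less_iff zero_less_mult_pos2)

section \<open>Partial matchings between two disjoint sets\<close>

lemma prod_diff_eq_choose_mult_fact: "(\<Prod>i = 0..<t. n - i) = (n choose t) * fact t"
proof (induction t)
  case (Suc t)
  have "(\<Prod>i = 0..<Suc t. n - i) = (n - t) * (n choose t) * fact t"
    using Suc by simp
  also have "(n - t) * (n choose t) = Suc t * (n choose Suc t)"
    using binomial_absorb_comp binomial_absorption by presburger
  finally show ?case
    by (simp add: algebra_simps)
qed simp

lemma sum_nonempty_subsets_by_card:
  fixes g :: "nat \<Rightarrow> real"
  assumes "finite X"
  shows "(\<Sum>U | U \<subseteq> X \<and> U \<noteq> {}. g (card U)) = (\<Sum>t = 1..card X. real (card X choose t) * g t)"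
proof -
  have "card ` {U. U \<subseteq> X \<and> U \<noteq> {}} \<subseteq> {1..card X}"
    using assms by (auto simp: Suc_le_eq card_gt_0_iff card_mono dest: finite_subset)
  then have "(\<Sum>U | U \<subseteq> X \<and> U \<noteq> {}. g (card U))
      = (\<Sum>t = 1..card X. \<Sum>U \<in> {U \<in> {U. U \<subseteq> X \<and> U \<noteq> {}}. card U = t}. g (card U))"
    using assms by (intro sum.group[symmetric]) auto
  also have "\<dots> = (\<Sum>t = 1..card X. \<Sum>U | U \<subseteq> X \<and> card U = t. g t)"
    by (intro sum.cong refl arg_cong2[where f = sum]) auto
  also have "\<dots> = (\<Sum>t = 1..card X. real (card X choose t) * g t)"
    using n_subsets[OF assms] by simp
  finally show ?thesis .
qed

definition cross_pairs :: "'b set \<Rightarrow> 'b set \<Rightarrow> 'b set set" where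
  "cross_pairs X Y = {{x, y} | x y. x \<in> X \<and> y \<in> Y}"

lemma cross_pairs_commute: "cross_pairs X Y = cross_pairs Y X"
  by (auto simp: cross_pairs_def insert_commute)

lemma finite_cross_pairs:
  assumes "finite X" "finite Y"
  shows "finite (cross_pairs X Y)"
proof -
  have "cross_pairs X Y = (\<lambda>(x, y). {x, y}) ` (X \<times> Y)"
    by (auto simp: cross_pairs_def)
  then show ?thesis
    using assms by simp
qed

lemma card_cross_pair: "X \<inter> Y = {} \<Longrightarrow> b \<in> cross_pairs X Y \<Longrightarrow> card b = 2"
  unfolding cross_pairs_def by (auto simp: card_insert_if disjoint_iff)

lemma card_Int_Union_cross_pairs:
  assumes XY: "X \<inter> Y = {}" and I: "I \<subseteq> cross_pairs X Y" "disjoint I" "finite I"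
  shows "card (X \<inter> \<Union>I) = card I"
proof -
  have one: "card (X \<inter> b) = 1" if b: "b \<in> I" for b
  proof -
    obtain x y where "b = {x, y}" "x \<in> X" "y \<in> Y"
      using b I(1) unfolding cross_pairs_def by blast
    then have "X \<inter> b = {x}"
      using XY by auto
    then show ?thesis
      by simp
  qed
  have "card (\<Union>b\<in>I. X \<inter> b) = (\<Sum>b\<in>I. card (X \<inter> b))"
  proof (rule card_UN_disjoint[OF I(3)])
    show "\<forall>b\<in>I. finite (X \<inter> b)"
      using one by (metis card.infinite zero_neq_one)
    show "\<forall>b\<in>I. \<forall>c\<in>I. b \<noteq> c \<longrightarrow> X \<inter> b \<inter> (X \<inter> c) = {}"
      using I(2) by (auto dest: disjointD)
  qed
  also have "\<dots> = card I"
    using one by simp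
  also have "(\<Union>b\<in>I. X \<inter> b) = X \<inter> \<Union>I"
    by blast
  finally show ?thesis .
qed

(* A nonempty disjoint set of cross pairs is the graph of an injection from some nonempty U \<subseteq> X
   into Y; this bijection counts such sets. *)
locale cross_matching =
  fixes X Y :: "'b set"
  assumes disjoint_sides: "X \<inter> Y = {}"
begin

definition partial_injections :: "('b set \<times> ('b \<Rightarrow> 'b)) set" where
  "partial_injections = Sigma {U. U \<subseteq> X \<and> U \<noteq> {}} (\<lambda>U. {f \<in> U \<rightarrow>\<^sub>E Y. inj_on f U})"

definition pairs_of :: "'b set \<times> ('b \<Rightarrow> 'b) \<Rightarrow> 'b set set" where
  "pairs_of Uf = (\<lambda>x. {x, snd Uf x}) ` fst Uf"

lemma doubleton_eq_across:
  "x \<in> X \<Longrightarrow> y \<in> Y \<Longrightarrow> x' \<in> X \<Longrightarrow> y' \<in> Y \<Longrightarrow> {x, y} = {x', y'} \<longleftrightarrow> x = x' \<and> y = y'"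
  using disjoint_sides by (auto simp: doubleton_eq_iff)

lemma cross_pair_through:
  "e \<in> cross_pairs X Y \<Longrightarrow> x \<in> e \<Longrightarrow> x \<in> X \<Longrightarrow> \<exists>y\<in>Y. e = {x, y}"
  using disjoint_sides by (auto simp: cross_pairs_def)

lemma partial_injectionsD:
  assumes "(U, f) \<in> partial_injections" "x \<in> U"
  shows "x \<in> X" "f x \<in> Y"
  using assms by (auto simp: partial_injections_def)

lemma card_pairs_of:
  assumes p: "(U, f) \<in> partial_injections"
  shows "card (pairs_of (U, f)) = card U"
proof -
  have "inj_on (\<lambda>x. {x, f x}) U"
    using partial_injectionsD[OF p] by (intro inj_onI) (simp add: doubleton_eq_across)
  then show ?thesis
    by (simp add: pairs_of_def card_image)
qed

lemma inj_on_pairs_of: "inj_on pairs_of partial_injections"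
proof (rule inj_onI)
  fix p q assume p: "p \<in> partial_injections" and q: "q \<in> partial_injections"
    and eq: "pairs_of p = pairs_of q"
  obtain U f V g where pq: "p = (U, f)" "q = (V, g)"
    by fastforce
  note in_U = partial_injectionsD[OF p[unfolded pq]] and in_V = partial_injectionsD[OF q[unfolded pq]]
  have "X \<inter> \<Union>(pairs_of p) = U" "X \<inter> \<Union>(pairs_of q) = V"
    using in_U in_V pq disjoint_sides by (auto simp: pairs_of_def)
  then have "U = V"
    using eq by simp
  have "f x = g x" if x: "x \<in> U" for x
  proof -
    have "{x, f x} \<in> pairs_of q"
      unfolding eq[symmetric] using x pq by (simp add: pairs_of_def)
    then obtain x' where "x' \<in> V" "{x, f x} = {x', g x'}"
      using pq by (auto simp: pairs_of_def)
    then show ?thesis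
      using in_U in_V x by (auto simp: doubleton_eq_across)
  qed
  moreover have "f \<in> extensional U" "g \<in> extensional V"
    using p q pq by (auto simp: partial_injections_def PiE_iff)
  ultimately show "p = q"
    using pq \<open>U = V\<close> by (auto intro: extensionalityI)
qed

lemma pairs_of_in_disjoint_cross_pairs:
  assumes "p \<in> partial_injections"
  shows "pairs_of p \<subseteq> cross_pairs X Y" "pairs_of p \<noteq> {}" "disjoint (pairs_of p)"
proof -
  obtain U f where p: "p = (U, f)" "U \<noteq> {}" "inj_on f U"
    using assms by (auto simp: partial_injections_def)
  note in_U = partial_injectionsD[OF assms[unfolded p(1)]]
  show "pairs_of p \<subseteq> cross_pairs X Y" "pairs_of p \<noteq> {}"
    using p in_U by (auto simp: pairs_of_def cross_pairs_def)
  show "disjoint (pairs_of p)"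
  proof (rule disjointI)
    fix a b assume "a \<in> pairs_of p" "b \<in> pairs_of p" "a \<noteq> b"
    then obtain x x' where "x \<in> U" "x' \<in> U" "x \<noteq> x'" "a = {x, f x}" "b = {x', f x'}"
      using p(1) by (auto simp: pairs_of_def)
    then show "a \<inter> b = {}"
      using p(3) in_U disjoint_sides by (auto dest: inj_onD)
  qed
qed

lemma disjoint_cross_pairs_in_image:
  assumes I: "I \<subseteq> cross_pairs X Y" "I \<noteq> {}" "disjoint I"
  shows "I \<in> pairs_of ` partial_injections"
proof -
  define U where "U = X \<inter> \<Union>I"
  have partner: "\<exists>!y. y \<in> Y \<and> {x, y} \<in> I" if x: "x \<in> U" for x
  proof -
    obtain y where y: "y \<in> Y" "{x, y} \<in> I"
      using x I(1) cross_pair_through by (fastforce simp: U_def)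
    moreover have "y' = y" if "{x, y'} \<in> I" for y'
      using disjointD[OF I(3) that y(2)] by (auto simp: doubleton_eq_iff)
    ultimately show ?thesis
      by blast
  qed
  define f where "f = (\<lambda>x\<in>U. THE y. y \<in> Y \<and> {x, y} \<in> I)"
  have f: "f x \<in> Y" "{x, f x} \<in> I" if "x \<in> U" for x
    using theI'[OF partner[OF that]] that by (simp_all add: f_def)
  have "f \<in> U \<rightarrow>\<^sub>E Y"
    using f by (simp add: f_def)
  moreover have "inj_on f U"
  proof (rule inj_onI)
    fix x x' assume x: "x \<in> U" "x' \<in> U" "f x = f x'"
    then have "{x, f x} = {x', f x'}"
      using disjointD[OF I(3) f(2)[OF x(1)] f(2)[OF x(2)]] by blast
    then show "x = x'"
      using x f(1) by (simp add: U_def doubleton_eq_across)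
  qed
  moreover have "U \<noteq> {}"
    using I(1,2) by (auto simp: U_def cross_pairs_def)
  moreover have "U \<subseteq> X"
    by (simp add: U_def)
  ultimately have "(U, f) \<in> partial_injections"
    by (simp add: partial_injections_def)
  moreover have "pairs_of (U, f) = I"
  proof (intro equalityI subsetI)
    fix e assume e: "e \<in> I"
    then obtain x y where xy: "e = {x, y}" "x \<in> X" "y \<in> Y"
      using I(1) by (auto simp: cross_pairs_def)
    then have "x \<in> U"
      using e by (auto simp: U_def)
    then have "f x = y"
      using partner f e xy by blast
    then show "e \<in> pairs_of (U, f)"
      using \<open>x \<in> U\<close> xy by (auto simp: pairs_of_def)
  qed (auto simp: pairs_of_def f)
  ultimately show ?thesis
    by (metis image_eqI)
qed

lemma sum_disjoint_cross_pairs: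
  fixes g :: "nat \<Rightarrow> real"
  assumes fin: "finite X" "finite Y"
  shows "(\<Sum>I | I \<subseteq> cross_pairs X Y \<and> I \<noteq> {} \<and> disjoint I. g (card I))
       = (\<Sum>t = 1..min (card X) (card Y). real (card X choose t) * real (card Y choose t) * fact t * g t)"
proof -
  have image: "pairs_of ` partial_injections = {I. I \<subseteq> cross_pairs X Y \<and> I \<noteq> {} \<and> disjoint I}"
    using pairs_of_in_disjoint_cross_pairs disjoint_cross_pairs_in_image by blast
  have "(\<Sum>I | I \<subseteq> cross_pairs X Y \<and> I \<noteq> {} \<and> disjoint I. g (card I))
      = (\<Sum>p\<in>partial_injections. g (card (pairs_of p)))"
    unfolding image[symmetric] by (simp add: sum.reindex inj_on_pairs_of)
  also have "\<dots> = (\<Sum>p\<in>partial_injections. g (card (fst p)))"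
    using card_pairs_of by (intro sum.cong) auto
  also have "\<dots> = (\<Sum>U | U \<subseteq> X \<and> U \<noteq> {}. \<Sum>f | f \<in> U \<rightarrow>\<^sub>E Y \<and> inj_on f U. g (card U))"
    unfolding partial_injections_def using fin
    by (subst sum.Sigma) (auto simp: finite_PiE split_beta dest: finite_subset)
  also have "\<dots> = (\<Sum>U | U \<subseteq> X \<and> U \<noteq> {}. real ((card Y choose card U) * fact (card U)) * g (card U))"
  proof (intro sum.cong refl)
    fix U assume "U \<in> {U. U \<subseteq> X \<and> U \<noteq> {}}"
    then have "finite U"
      using fin(1) finite_subset by blast
    then have "card {f \<in> U \<rightarrow>\<^sub>E Y. inj_on f U} = (card Y choose card U) * fact (card U)"
      using fin(2) card_inj_on_subset_funcset[of U Y U] by (simp add: prod_diff_eq_choose_mult_fact)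
    then show "(\<Sum>f | f \<in> U \<rightarrow>\<^sub>E Y \<and> inj_on f U. g (card U))
        = real ((card Y choose card U) * fact (card U)) * g (card U)"
      by simp
  qed
  also have "\<dots> = (\<Sum>t = 1..card X. real (card X choose t) * (real ((card Y choose t) * fact t) * g t))"
    using sum_nonempty_subsets_by_card[OF fin(1), of "\<lambda>t. real ((card Y choose t) * fact t) * g t"]
    by simp
  also have "\<dots> = (\<Sum>t = 1..min (card X) (card Y). real (card X choose t) * real (card Y choose t) * fact t * g t)"
  proof (rule sum.mono_neutral_cong_right)
    show "\<forall>t\<in>{1..card X} - {1..min (card X) (card Y)}.
        real (card X choose t) * (real ((card Y choose t) * fact t) * g t) = 0"
    proof
      fix t assume "t \<in> {1..card X} - {1..min (card X) (card Y)}"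
      then have "card Y < t"
        by auto
      then show "real (card X choose t) * (real ((card Y choose t) * fact t) * g t) = 0"
        by simp
    qed
  qed simp_all
  finally show ?thesis .
qed

end

section \<open>Inclusion-exclusion over cross pairs\<close>

definition connects :: "'b set set \<Rightarrow> 'b set \<Rightarrow> 'b set \<Rightarrow> bool" where
  "connects P X Y \<longleftrightarrow> (\<exists>b\<in>P. b \<inter> X \<noteq> {} \<and> b \<inter> Y \<noteq> {})"

lemma connects_commute: "connects P X Y \<longleftrightarrow> connects P Y X"
  by (auto simp: connects_def)

lemma connects_iff_cross_pair:
  assumes P: "P \<in> perfect_matchings S" and XY: "X \<inter> Y = {}"
  shows "connects P X Y \<longleftrightarrow> (\<exists>e\<in>cross_pairs X Y. e \<in> P)"
proof
  assume "connects P X Y"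
  then obtain b x y where b: "b \<in> P" "x \<in> b" "x \<in> X" "y \<in> b" "y \<in> Y"
    by (auto simp: connects_def)
  have "card b = 2"
    using P b(1) by (simp add: perfect_matchings_iff)
  moreover have "x \<noteq> y"
    using b XY by blast
  ultimately have "b = {x, y}"
    using b card_subset_eq[of b "{x, y}"] card_ge_0_finite[of b] by simp
  then show "\<exists>e\<in>cross_pairs X Y. e \<in> P"
    using b by (auto simp: cross_pairs_def)
next
  assume "\<exists>e\<in>cross_pairs X Y. e \<in> P"
  then obtain x y where "{x, y} \<in> P" "x \<in> X" "y \<in> Y"
    by (auto simp: cross_pairs_def)
  then show "connects P X Y"
    unfolding connects_def by (intro bexI[of _ "{x, y}"]) auto
qed

lemma card_members_incl_excl:
  fixes \<Omega> :: "'b set set" and F :: "'b set"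
  assumes "finite \<Omega>" "finite F"
  shows "real (card {P \<in> \<Omega>. \<exists>e\<in>F. e \<in> P})
       = (\<Sum>I | I \<subseteq> F \<and> I \<noteq> {}. (-1) ^ (card I + 1) * real (card {P \<in> \<Omega>. I \<subseteq> P}))"
proof -
  define \<mu> where "\<mu> Z = real (card (Z \<inter> \<Omega>))" for Z
  have "\<mu> (A \<union> B) = \<mu> A + \<mu> B" if "disjnt A B" for A B
  proof -
    have "(A \<union> B) \<inter> \<Omega> = A \<inter> \<Omega> \<union> B \<inter> \<Omega>" "A \<inter> \<Omega> \<inter> (B \<inter> \<Omega>) = {}"
      using that by (auto simp: disjnt_def)
    then show ?thesis
      using assms(1) by (simp add: \<mu>_def card_Un_disjoint)
  qed
  then have "\<mu> (\<Union>e\<in>F. {P. e \<in> P})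
      = (\<Sum>I | I \<subseteq> F \<and> I \<noteq> {}. (-1) ^ (card I + 1) * \<mu> (\<Inter>e\<in>I. {P. e \<in> P}))"
    using Incl_Excl_UN[of \<mu> F "\<lambda>e. {P. e \<in> P}"] assms(2) by blast
  also have "\<dots> = (\<Sum>I | I \<subseteq> F \<and> I \<noteq> {}. (-1) ^ (card I + 1) * real (card {P \<in> \<Omega>. I \<subseteq> P}))"
  proof (intro sum.cong refl)
    fix I assume "I \<in> {I. I \<subseteq> F \<and> I \<noteq> {}}"
    then have "(\<Inter>e\<in>I. {P. e \<in> P}) \<inter> \<Omega> = {P \<in> \<Omega>. I \<subseteq> P}"
      by auto
    then show "(-1) ^ (card I + 1) * \<mu> (\<Inter>e\<in>I. {P. e \<in> P})
        = (-1) ^ (card I + 1) * real (card {P \<in> \<Omega>. I \<subseteq> P})"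
      by (simp add: \<mu>_def)
  qed
  also have "\<mu> (\<Union>e\<in>F. {P. e \<in> P}) = real (card {P \<in> \<Omega>. \<exists>e\<in>F. e \<in> P})"
    unfolding \<mu>_def by (rule arg_cong[where f = "\<lambda>A. real (card A)"]) auto
  finally show ?thesis .
qed

lemma cross_matching_residual:
  assumes S: "finite S" "card S = 2 * n" and XY: "X \<subseteq> S" "Y \<subseteq> S" "X \<inter> Y = {}"
    and I: "I \<subseteq> cross_pairs X Y" "disjoint I"
  shows "card I \<le> n" "card (S - \<Union>I) = 2 * (n - card I)"
    "card (X - \<Union>I) = card X - card I" "card (Y - \<Union>I) = card Y - card I"
    "card {P \<in> perfect_matchings S. I \<subseteq> P \<and> R P}
       = card {P' \<in> perfect_matchings (S - \<Union>I). R (P' \<union> I)}"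
proof -
  have fin: "finite X" "finite Y"
    using S(1) XY(1,2) finite_subset by auto
  then have "finite I"
    using I(1) finite_cross_pairs finite_subset by blast
  then have cX: "card (X \<inter> \<Union>I) = card I" and cY: "card (Y \<inter> \<Union>I) = card I"
    using card_Int_Union_cross_pairs[of X Y I] card_Int_Union_cross_pairs[of Y X I] XY(3) I
    by (auto simp: cross_pairs_commute Int_commute)
  have U: "\<Union>I = (X \<inter> \<Union>I) \<union> (Y \<inter> \<Union>I)"
    using I(1) by (auto simp: cross_pairs_def)
  moreover have "(X \<inter> \<Union>I) \<inter> (Y \<inter> \<Union>I) = {}"
    using XY(3) by blast
  ultimately have "card (\<Union>I) = card (X \<inter> \<Union>I) + card (Y \<inter> \<Union>I)"
    using fin by (metis card_Un_disjoint finite_Int)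
  then have "card (\<Union>I) = 2 * card I"
    using cX cY by simp
  moreover have "\<Union>I \<subseteq> S"
    using U XY(1,2) by blast
  ultimately show "card I \<le> n" "card (S - \<Union>I) = 2 * (n - card I)"
    using S card_mono[OF S(1), of "\<Union>I"] card_Diff_subset[of "\<Union>I" S] finite_subset[of "\<Union>I" S]
    by auto
  show "card (X - \<Union>I) = card X - card I" "card (Y - \<Union>I) = card Y - card I"
    using fin cX cY by (simp_all add: card_Diff_subset_Int)
  show "card {P \<in> perfect_matchings S. I \<subseteq> P \<and> R P}
      = card {P' \<in> perfect_matchings (S - \<Union>I). R (P' \<union> I)}"
    using card_cross_pair[OF XY(3)] I \<open>\<Union>I \<subseteq> S\<close>
    by (intro card_perfect_matchings_containing) auto
qed

lemma connects_Un_residual: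
  assumes "P' \<in> perfect_matchings (S - \<Union>I)" "\<Union>I \<inter> X = {}"
  shows "connects (P' \<union> I) X Z \<longleftrightarrow> connects P' X (Z - \<Union>I)"
    and "connects (P' \<union> I) Z X \<longleftrightarrow> connects P' (Z - \<Union>I) X"
proof -
  have "b \<inter> X = {}" if "b \<in> I" for b
    using assms(2) that by auto
  then have "connects (P' \<union> I) X Z \<longleftrightarrow> (\<exists>b\<in>P'. b \<inter> X \<noteq> {} \<and> b \<inter> Z \<noteq> {})"
    unfolding connects_def by blast
  also have "b \<inter> Z = b \<inter> (Z - \<Union>I)" if "b \<in> P'" for b
    using assms(1) that by (auto simp: perfect_matchings_iff)
  then have "(\<exists>b\<in>P'. b \<inter> X \<noteq> {} \<and> b \<inter> Z \<noteq> {}) \<longleftrightarrow> connects P' X (Z - \<Union>I)"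
    unfolding connects_def by simp
  finally show "connects (P' \<union> I) X Z \<longleftrightarrow> connects P' X (Z - \<Union>I)" .
  then show "connects (P' \<union> I) Z X \<longleftrightarrow> connects P' (Z - \<Union>I) X"
    by (simp add: connects_commute)
qed

lemma card_connects_incl_excl:
  assumes fin: "finite S" "finite X" "finite Y" and XY: "X \<inter> Y = {}"
  shows "real (card {P \<in> perfect_matchings S. connects P X Y \<and> R P})
    = (\<Sum>I | I \<subseteq> cross_pairs X Y \<and> I \<noteq> {} \<and> disjoint I.
         (-1) ^ (card I + 1) * real (card {P \<in> perfect_matchings S. I \<subseteq> P \<and> R P}))"
proof -
  define \<Omega> where "\<Omega> = {P \<in> perfect_matchings S. R P}"
  have "{P \<in> perfect_matchings S. connects P X Y \<and> R P} = {P \<in> \<Omega>. \<exists>e\<in>cross_pairs X Y. e \<in> P}"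
    using connects_iff_cross_pair[OF _ XY] by (auto simp: \<Omega>_def)
  then have "real (card {P \<in> perfect_matchings S. connects P X Y \<and> R P})
      = (\<Sum>I | I \<subseteq> cross_pairs X Y \<and> I \<noteq> {}. (-1) ^ (card I + 1) * real (card {P \<in> \<Omega>. I \<subseteq> P}))"
    using card_members_incl_excl[of \<Omega> "cross_pairs X Y"] finite_perfect_matchings[OF fin(1)]
      finite_cross_pairs[OF fin(2,3)] by (simp add: \<Omega>_def)
  also have "\<dots> = (\<Sum>I | I \<subseteq> cross_pairs X Y \<and> I \<noteq> {} \<and> disjoint I.
      (-1) ^ (card I + 1) * real (card {P \<in> perfect_matchings S. I \<subseteq> P \<and> R P}))"
  proof (rule sum.mono_neutral_cong_right)
    show "\<forall>I\<in>{I. I \<subseteq> cross_pairs X Y \<and> I \<noteq> {}} - {I. I \<subseteq> cross_pairs X Y \<and> I \<noteq> {} \<and> disjoint I}.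
        (-1) ^ (card I + 1) * real (card {P \<in> \<Omega>. I \<subseteq> P}) = 0"
    proof
      fix I assume "I \<in> {I. I \<subseteq> cross_pairs X Y \<and> I \<noteq> {}} - {I. I \<subseteq> cross_pairs X Y \<and> I \<noteq> {} \<and> disjoint I}"
      then have empty: "{P \<in> \<Omega>. I \<subseteq> P} = {}"
        using disjoint_if_subset_perfect_matching by (auto simp: \<Omega>_def)
      show "(-1) ^ (card I + 1) * real (card {P \<in> \<Omega>. I \<subseteq> P}) = 0"
        unfolding empty by simp
    qed
    have "{P \<in> \<Omega>. I \<subseteq> P} = {P \<in> perfect_matchings S. I \<subseteq> P \<and> R P}" for I
      by (auto simp: \<Omega>_def)
    then show "(-1) ^ (card I + 1) * real (card {P \<in> \<Omega>. I \<subseteq> P})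
        = (-1) ^ (card I + 1) * real (card {P \<in> perfect_matchings S. I \<subseteq> P \<and> R P})" for I
      by simp
  qed (use finite_cross_pairs[OF fin(2,3)] in auto)
  finally show ?thesis .
qed

lemma card_connects_and:
  fixes h :: "nat \<Rightarrow> real"
  assumes S: "finite S" "card S = 2 * n" and XY: "X \<subseteq> S" "Y \<subseteq> S" "X \<inter> Y = {}"
    and h: "\<And>I. I \<subseteq> cross_pairs X Y \<Longrightarrow> I \<noteq> {} \<Longrightarrow> disjoint I \<Longrightarrow>
      real (card {P \<in> perfect_matchings S. I \<subseteq> P \<and> R P}) = h (card I) * real (odd_double_fact (n - card I))"
  shows "real (card {P \<in> perfect_matchings S. connects P X Y \<and> R P})
    = (\<Sum>t = 1..min (card X) (card Y). (-1) ^ (t + 1) * h t *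
         (real (card X choose t) * real (card Y choose t) * fact t) / dprod (int n) t)
      * real (odd_double_fact n)"
proof -
  interpret cross_matching X Y
    using XY(3) by unfold_locales
  have fin: "finite X" "finite Y"
    using S(1) XY(1,2) finite_subset by auto
  have "real (card {P \<in> perfect_matchings S. connects P X Y \<and> R P})
      = (\<Sum>I | I \<subseteq> cross_pairs X Y \<and> I \<noteq> {} \<and> disjoint I.
          (-1) ^ (card I + 1) * h (card I) * real (odd_double_fact (n - card I)))"
    unfolding card_connects_incl_excl[OF S(1) fin XY(3)] using h by (intro sum.cong refl) simp
  also have "\<dots> = (\<Sum>t = 1..min (card X) (card Y). real (card X choose t) * real (card Y choose t) * fact t *
      ((-1) ^ (t + 1) * h t * real (odd_double_fact (n - t))))"
    by (rule sum_disjoint_cross_pairs[OF fin,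
          where g = "\<lambda>t. (-1) ^ (t + 1) * h t * real (odd_double_fact (n - t))"])
  also have "\<dots> = (\<Sum>t = 1..min (card X) (card Y). (-1) ^ (t + 1) * h t *
         (real (card X choose t) * real (card Y choose t) * fact t) / dprod (int n) t)
      * real (odd_double_fact n)"
    unfolding sum_distrib_right
  proof (intro sum.cong refl)
    fix t assume "t \<in> {1..min (card X) (card Y)}"
    moreover have "card X + card Y \<le> card S"
      using XY S(1) by (metis card_Un_disjoint card_mono fin le_sup_iff)
    ultimately have "t \<le> n"
      using S(2) by auto
    then show "real (card X choose t) * real (card Y choose t) * fact t *
        ((-1) ^ (t + 1) * h t * real (odd_double_fact (n - t)))
      = (-1) ^ (t + 1) * h t * (real (card X choose t) * real (card Y choose t) * fact t)
          / dprod (int n) t * real (odd_double_fact n)"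
      using odd_double_fact_eq_dprod[of t n] dprod_pos[of t n] by (simp add: field_simps)
  qed
  finally show ?thesis .
qed

lemma card_connects:
  assumes S: "finite S" "card S = 2 * n" and XY: "X \<subseteq> S" "Y \<subseteq> S" "X \<inter> Y = {}"
  shows "real (card {P \<in> perfect_matchings S. connects P X Y})
       = A_fun (card X) (card Y) (int n) * real (odd_double_fact n)"
proof -
  have "real (card {P \<in> perfect_matchings S. connects P X Y \<and> True})
      = (\<Sum>t = 1..min (card X) (card Y). (-1) ^ (t + 1) * 1 *
           (real (card X choose t) * real (card Y choose t) * fact t) / dprod (int n) t)
        * real (odd_double_fact n)"
  proof (rule card_connects_and[OF S XY, where h = "\<lambda>_. 1"])
    fix I assume I: "I \<subseteq> cross_pairs X Y" "I \<noteq> {}" "disjoint I"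
    note residual = cross_matching_residual[OF S XY I(1,3)]
    show "real (card {P \<in> perfect_matchings S. I \<subseteq> P \<and> True}) = 1 * real (odd_double_fact (n - card I))"
      using residual(2) residual(5)[where R = "\<lambda>_. True"] card_perfect_matchings[of "S - \<Union>I" "n - card I"] S(1)
      by simp
  qed
  then show ?thesis
    by (simp add: A_fun_def)
qed

lemma card_connects_common:
  assumes S: "finite S" "card S = 2 * n"
    and XYZ: "X \<subseteq> S" "Y \<subseteq> S" "Z \<subseteq> S" "X \<inter> Y = {}" "X \<inter> Z = {}" "Y \<inter> Z = {}"
  shows "real (card {P \<in> perfect_matchings S. connects P X Z \<and> connects P Y Z})
       = C_fun (card X) (card Y) (card Z) (int n) * real (odd_double_fact n)"
proof -
  define h where "h t = A_fun (card X) (card Z - t) (int n - int t)" for t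
  have "{P \<in> perfect_matchings S. connects P X Z \<and> connects P Y Z}
      = {P \<in> perfect_matchings S. connects P Y Z \<and> connects P X Z}"
    by auto
  also have "real (card \<dots>)
      = (\<Sum>t = 1..min (card Y) (card Z). (-1) ^ (t + 1) * h t *
           (real (card Y choose t) * real (card Z choose t) * fact t) / dprod (int n) t)
        * real (odd_double_fact n)"
  proof (rule card_connects_and[OF S XYZ(2,3,6)])
    fix I assume I: "I \<subseteq> cross_pairs Y Z" "I \<noteq> {}" "disjoint I"
    note residual = cross_matching_residual[OF S XYZ(2,3,6) I(1,3)]
    have "\<Union>I \<inter> X = {}"
      using I(1) XYZ(4,5) by (auto simp: cross_pairs_def)
    then have "{P' \<in> perfect_matchings (S - \<Union>I). connects (P' \<union> I) X Z}
        = {P' \<in> perfect_matchings (S - \<Union>I). connects P' X (Z - \<Union>I)}"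
      using connects_Un_residual(1)[OF _ \<open>\<Union>I \<inter> X = {}\<close>] by (intro Collect_cong conj_cong) auto
    then have "real (card {P \<in> perfect_matchings S. I \<subseteq> P \<and> connects P X Z})
        = real (card {P' \<in> perfect_matchings (S - \<Union>I). connects P' X (Z - \<Union>I)})"
      using residual(5) by simp
    also have "\<dots> = A_fun (card X) (card (Z - \<Union>I)) (int (n - card I)) * real (odd_double_fact (n - card I))"
      using S XYZ residual(2) \<open>\<Union>I \<inter> X = {}\<close> by (intro card_connects) auto
    finally show "real (card {P \<in> perfect_matchings S. I \<subseteq> P \<and> connects P X Z})
        = h (card I) * real (odd_double_fact (n - card I))"
      using residual(1,4) by (simp add: h_def of_nat_diff)
  qed
  also have "(\<Sum>t = 1..min (card Y) (card Z). (-1) ^ (t + 1) * h t *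
           (real (card Y choose t) * real (card Z choose t) * fact t) / dprod (int n) t)
      = C_fun (card X) (card Y) (card Z) (int n)"
    unfolding C_fun_def
  \<comment> \<open>the extra term t = card Z vanishes because A_fun a 0 M = 0\<close>
  proof (rule sum.mono_neutral_cong_right)
    show "\<forall>t\<in>{1..min (card Y) (card Z)} - {1..min (card Y) (card Z - 1)}.
        (-1) ^ (t + 1) * h t * (real (card Y choose t) * real (card Z choose t) * fact t) / dprod (int n) t = 0"
      by (auto simp: h_def A_fun_def)
  qed (auto simp: h_def ac_simps)
  finally show ?thesis .
qed

lemma card_connects_triangle:
  assumes S: "finite S" "card S = 2 * n"
    and XYZ: "X \<subseteq> S" "Y \<subseteq> S" "Z \<subseteq> S" "X \<inter> Y = {}" "X \<inter> Z = {}" "Y \<inter> Z = {}"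
  shows "real (card {P \<in> perfect_matchings S. connects P X Z \<and> connects P Y Z \<and> connects P X Y})
       = T_fun (card X) (card Y) (card Z) (int n) * real (odd_double_fact n)"
proof -
  define h where "h t = C_fun (card X - t) (card Y - t) (card Z) (int n - int t)" for t
  have "{P \<in> perfect_matchings S. connects P X Z \<and> connects P Y Z \<and> connects P X Y}
      = {P \<in> perfect_matchings S. connects P X Y \<and> (connects P X Z \<and> connects P Y Z)}"
    by auto
  also have "real (card \<dots>)
      = (\<Sum>t = 1..min (card X) (card Y). (-1) ^ (t + 1) * h t *
           (real (card X choose t) * real (card Y choose t) * fact t) / dprod (int n) t)
        * real (odd_double_fact n)"
  proof (rule card_connects_and[OF S XYZ(1,2,4)])
    fix I assume I: "I \<subseteq> cross_pairs X Y" "I \<noteq> {}" "disjoint I"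
    note residual = cross_matching_residual[OF S XYZ(1,2,4) I(1,3)]
    have "\<Union>I \<inter> Z = {}"
      using I(1) XYZ(5,6) by (auto simp: cross_pairs_def)
    then have "{P' \<in> perfect_matchings (S - \<Union>I). connects (P' \<union> I) X Z \<and> connects (P' \<union> I) Y Z}
        = {P' \<in> perfect_matchings (S - \<Union>I). connects P' (X - \<Union>I) Z \<and> connects P' (Y - \<Union>I) Z}"
      using connects_Un_residual(2)[OF _ \<open>\<Union>I \<inter> Z = {}\<close>] by (intro Collect_cong conj_cong) auto
    then have "real (card {P \<in> perfect_matchings S. I \<subseteq> P \<and> (connects P X Z \<and> connects P Y Z)})
        = real (card {P' \<in> perfect_matchings (S - \<Union>I). connects P' (X - \<Union>I) Z \<and> connects P' (Y - \<Union>I) Z})"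
      using residual(5) by simp
    also have "\<dots> = C_fun (card (X - \<Union>I)) (card (Y - \<Union>I)) (card Z) (int (n - card I))
        * real (odd_double_fact (n - card I))"
      using S XYZ residual(2) \<open>\<Union>I \<inter> Z = {}\<close> by (intro card_connects_common) auto
    finally show "real (card {P \<in> perfect_matchings S. I \<subseteq> P \<and> (connects P X Z \<and> connects P Y Z)})
        = h (card I) * real (odd_double_fact (n - card I))"
      using residual(1,3,4) by (simp add: h_def of_nat_diff)
  qed
  also have "(\<Sum>t = 1..min (card X) (card Y). (-1) ^ (t + 1) * h t *
           (real (card X choose t) * real (card Y choose t) * fact t) / dprod (int n) t)
      = T_fun (card X) (card Y) (card Z) (int n)"
    unfolding T_fun_def
  \<comment> \<open>the extra terms t = card X and t = card Y vanish because C_fun 0 b c M = C_fun a 0 c M = 0\<close>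
  proof (rule sum.mono_neutral_cong_right)
    show "\<forall>t\<in>{1..min (card X) (card Y)} - {1..min (card X - 1) (card Y - 1)}.
        (-1) ^ (t + 1) * h t * (real (card X choose t) * real (card Y choose t) * fact t) / dprod (int n) t = 0"
      by (auto simp: h_def C_fun_def A_fun_def)
  qed (auto simp: h_def)
  finally show ?thesis .
qed

section \<open>The configuration model\<close>

lemma card_stubs:
  assumes "simple_graph V E"
  shows "finite (stubs V E)" "card (stubs V E) = 2 * card E"
proof -
  have V: "finite V" and E: "\<forall>e\<in>E. \<exists>u v. u \<noteq> v \<and> u \<in> V \<and> v \<in> V \<and> e = {u, v}"
    using assms by (auto simp: simple_graph_def)
  have edge: "card e = 2" "e \<subseteq> V" if "e \<in> E" for e
    using E that by auto
  then have "E \<subseteq> Pow V"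
    by blast
  then have "finite E"
    using V by (simp add: finite_subset)
  have stubs: "stubs V E = Sigma V (\<lambda>i. {..<deg E i})"
    by (auto simp: stubs_def)
  then show "finite (stubs V E)"
    using V by simp
  have "card (stubs V E) = (\<Sum>i\<in>V. card {e \<in> E. i \<in> e})"
    using V by (simp add: stubs deg_def card_SigmaI)
  also have "\<dots> = (\<Sum>i\<in>V. \<Sum>e\<in>E. if i \<in> e then 1 else 0)"
    using sum.inter_filter[OF \<open>finite E\<close>, of "\<lambda>_. 1 :: nat"] by simp
  also have "\<dots> = (\<Sum>e\<in>E. \<Sum>i\<in>V. if i \<in> e then 1 else 0)"
    by (rule sum.swap)
  also have "\<dots> = (\<Sum>e\<in>E. card {i \<in> V. i \<in> e})"
    using sum.inter_filter[OF V, of "\<lambda>_. 1 :: nat"] by simp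
  also have "\<dots> = (\<Sum>e\<in>E. card e)"
    using edge(2) by (intro sum.cong refl arg_cong[where f = card]) auto
  also have "\<dots> = 2 * card E"
    using edge by simp
  finally show "card (stubs V E) = 2 * card E" .
qed

definition node_stubs :: "'a set set \<Rightarrow> 'a \<Rightarrow> ('a \<times> nat) set" where
  "node_stubs E u = {u} \<times> {..<deg E u}"

lemma node_stubs_subset: "u \<in> V \<Longrightarrow> node_stubs E u \<subseteq> stubs V E"
  by (auto simp: node_stubs_def stubs_def)

lemma card_node_stubs: "card (node_stubs E u) = deg E u"
  by (simp add: node_stubs_def card_cartesian_product)

lemma node_stubs_disjoint: "u \<noteq> v \<Longrightarrow> node_stubs E u \<inter> node_stubs E v = {}"
  by (auto simp: node_stubs_def)

lemma cm_connected_iff_connects: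
  assumes "P \<in> perfect_matchings (stubs V E)"
  shows "cm_connected P u v \<longleftrightarrow> connects P (node_stubs E u) (node_stubs E v)"
proof
  assume "cm_connected P u v"
  then obtain b s t where b: "b \<in> P" "(u, s) \<in> b" "(v, t) \<in> b"
    by (auto simp: cm_connected_def)
  moreover have "b \<subseteq> stubs V E"
    using assms b(1) by (auto simp: perfect_matchings_iff)
  ultimately have "(u, s) \<in> b \<inter> node_stubs E u" "(v, t) \<in> b \<inter> node_stubs E v"
    by (auto simp: stubs_def node_stubs_def)
  then show "connects P (node_stubs E u) (node_stubs E v)"
    unfolding connects_def using b(1) by (intro bexI[of _ b]) auto
next
  assume "connects P (node_stubs E u) (node_stubs E v)"
  then show "cm_connected P u v"
    by (auto simp: connects_def cm_connected_def node_stubs_def)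
qed

theorem proposition1:
  fixes V :: "'a set" and E :: "'a set set" and i j r :: 'a
  assumes "simple_graph V E"
    and "card E \<ge> 1"
    and "i \<in> V" and "j \<in> V" and "r \<in> V"
    and "i \<noteq> j" and "i \<noteq> r" and "j \<noteq> r"
  shows "cm_prob V E (\<lambda>P. cm_connected P i j)
           = A_fun (deg E i) (deg E j) (int (card E))
    \<and> cm_prob V E (\<lambda>P. cm_connected P i r \<and> cm_connected P j r)
           = C_fun (deg E i) (deg E j) (deg E r) (int (card E))
    \<and> cm_prob V E (\<lambda>P. cm_connected P i r \<and> cm_connected P j r \<and> cm_connected P i j)
           = T_fun (deg E i) (deg E j) (deg E r) (int (card E))"
proof -
  note S = card_stubs[OF assms(1)]
  have sub: "node_stubs E i \<subseteq> stubs V E" "node_stubs E j \<subseteq> stubs V E" "node_stubs E r \<subseteq> stubs V E"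
    using assms(3-5) by (simp_all add: node_stubs_subset)
  have disj: "node_stubs E i \<inter> node_stubs E j = {}" "node_stubs E i \<inter> node_stubs E r = {}"
    "node_stubs E j \<inter> node_stubs E r = {}"
    using assms(6-8) by (simp_all add: node_stubs_disjoint)
  have cm_prob: "cm_prob V E Q = real (card {P \<in> perfect_matchings (stubs V E). Q P})
      / real (odd_double_fact (card E))" for Q
    using card_perfect_matchings[OF S] by (simp add: cm_prob_def)
  show ?thesis
    using card_connects[OF S sub(1,2) disj(1)] card_connects_common[OF S sub disj]
      card_connects_triangle[OF S sub disj] odd_double_fact_pos[of "card E"]
    by (simp add: cm_prob cm_connected_iff_connects card_node_stubs cong: conj_cong)
qed

end
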